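(* Let $\mathcal{F}$ satisfy the standard conditions. If $A:\mathbb{N}\to\mathbb{Q}$ is an $\mathcal{F}$-sequence with $A(x)\neq0$ for all $x$, then $1/A$ is an $\mathcal{F}$-sequence.
   Context: $\mathbb{N}=\{0,1,2,\dots\}$. $\mathcal{F}$ is a set of functions $\mathbb{N}^n\to\mathbb{N}$ ($n\ge0$). It satisfies the standard conditions if it contains the zero function $Z(x)=0$, the successor $S(x)=x+1$, all projections $P^n_i(x_1,\dots,x_n)=x_i$, addition, multiplication and modified subtraction $x\dot- y=\max(x-y,0)$, and is closed under composition. An $\mathcal{F}$-sequence is a function $A:\mathbb{N}\to\mathbb{Q}$ of the form $A(x)=\frac{f(x)-g(x)}{h(x)+1}$ with $f,g,h:\mathbb{N}\to\mathbb{N}$ in $\mathcal{F}$. *)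

theory Defs
  imports Complex_Main
begin

text \<open>A class of functions N^n -> N is modelled as an arity-indexed family
  F :: nat => (nat list => nat) set; a function of arity n is a function on
  lists, only its values on lists of length n matter.\<close>

definition memF :: "(nat \<Rightarrow> (nat list \<Rightarrow> nat) set) \<Rightarrow> nat \<Rightarrow> (nat list \<Rightarrow> nat) \<Rightarrow> bool" where
  "memF F n f \<longleftrightarrow> (\<exists>g\<in>F n. \<forall>xs. length xs = n \<longrightarrow> f xs = g xs)"

definition standard_conditions :: "(nat \<Rightarrow> (nat list \<Rightarrow> nat) set) \<Rightarrow> bool" where
  "standard_conditions F \<longleftrightarrow>
     memF F 1 (\<lambda>xs. 0) \<and>
     memF F 1 (\<lambda>xs. xs ! 0 + 1) \<and>
     (\<forall>n i. i < n \<longrightarrow> memF F n (\<lambda>xs. xs ! i)) \<and>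
     memF F 2 (\<lambda>xs. xs ! 0 + xs ! 1) \<and>
     memF F 2 (\<lambda>xs. xs ! 0 * xs ! 1) \<and>
     memF F 2 (\<lambda>xs. xs ! 0 - xs ! 1) \<and>
     (\<forall>m n f gs. memF F m f \<and> length gs = m \<and> (\<forall>g\<in>set gs. memF F n g)
        \<longrightarrow> memF F n (\<lambda>xs. f (map (\<lambda>g. g xs) gs)))"

definition unaryF :: "(nat \<Rightarrow> (nat list \<Rightarrow> nat) set) \<Rightarrow> (nat \<Rightarrow> nat) \<Rightarrow> bool" where
  "unaryF F f \<longleftrightarrow> memF F 1 (\<lambda>xs. f (xs ! 0))"

definition F_sequence :: "(nat \<Rightarrow> (nat list \<Rightarrow> nat) set) \<Rightarrow> (nat \<Rightarrow> rat) \<Rightarrow> bool" where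
  "F_sequence F A \<longleftrightarrow> (\<exists>f g h. unaryF F f \<and> unaryF F g \<and> unaryF F h \<and>
      (\<forall>x. A x = (of_nat (f x) - of_nat (g x)) / (of_nat (h x) + 1)))"

end

theory Submission
  imports Defs
begin

text \<open>Write \<open>A = (f - g) / (h + 1)\<close>. As \<open>A\<close> never vanishes, \<open>f x \<noteq> g x\<close>, so
  \<open>1 / A = ((h + 1) [g < f] - (h + 1) [f < g]) / |f - g|\<close>. On \<open>nat\<close>, the indicator
  \<open>[f < g]\<close> is \<open>1 - (1 - (g - f))\<close> and \<open>|f - g| = (f - g) + (g - f)\<close> with truncated
  subtraction; since \<open>|f - g| \<ge> 1\<close>, it equals \<open>(|f - g| - 1) + 1\<close>.\<close>

lemma unaryF_compose:
  assumes "standard_conditions F" and "memF F (length fs) p" and "\<forall>f\<in>set fs. unaryF F f"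
  shows "unaryF F (\<lambda>x. p (map (\<lambda>f. f x) fs))"
proof -
  have closed: "memF F 1 (\<lambda>xs. p (map (\<lambda>u. u xs) gs))"
    if "length gs = length fs" and "\<forall>u\<in>set gs. memF F 1 u" for gs
    using assms(1,2) that unfolding standard_conditions_def by blast
  have "memF F 1 (\<lambda>xs. p (map (\<lambda>u. u xs) (map (\<lambda>f xs. f (xs ! 0)) fs)))"
    using assms(3) by (intro closed) (auto simp: unaryF_def)
  then show ?thesis
    unfolding unaryF_def by (simp add: comp_def)
qed

lemma unaryF_binop:
  assumes "standard_conditions F" and "memF F 2 (\<lambda>xs. p (xs ! 0) (xs ! 1))"
    and "unaryF F f" and "unaryF F g"
  shows "unaryF F (\<lambda>x. p (f x) (g x))"
  using unaryF_compose[of F "[f, g]" "\<lambda>xs. p (xs ! 0) (xs ! 1)"] assms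
  by (simp add: numeral_2_eq_2)

lemma unaryF_add:
  "standard_conditions F \<Longrightarrow> unaryF F f \<Longrightarrow> unaryF F g \<Longrightarrow> unaryF F (\<lambda>x. f x + g x)"
  by (rule unaryF_binop[where p = "(+)"]) (auto simp: standard_conditions_def)

lemma unaryF_mult:
  "standard_conditions F \<Longrightarrow> unaryF F f \<Longrightarrow> unaryF F g \<Longrightarrow> unaryF F (\<lambda>x. f x * g x)"
  by (rule unaryF_binop[where p = "(*)"]) (auto simp: standard_conditions_def)

lemma unaryF_diff:
  "standard_conditions F \<Longrightarrow> unaryF F f \<Longrightarrow> unaryF F g \<Longrightarrow> unaryF F (\<lambda>x. f x - g x)"
  by (rule unaryF_binop[where p = "(-)"]) (auto simp: standard_conditions_def)

lemma unaryF_Suc: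
  assumes "standard_conditions F" and "unaryF F f"
  shows "unaryF F (\<lambda>x. Suc (f x))"
  using unaryF_compose[of F "[f]" "\<lambda>xs. xs ! 0 + 1"] assms
  by (simp add: standard_conditions_def)

lemma unaryF_const:
  assumes "standard_conditions F"
  shows "unaryF F (\<lambda>x. k)"
proof (induction k)
  case 0
  show ?case using assms by (simp add: standard_conditions_def unaryF_def)
next
  case (Suc k)
  show ?case using unaryF_Suc[OF assms Suc] .
qed

lemma unaryF_less_indicator:
  assumes "standard_conditions F" and "unaryF F f" and "unaryF F g"
  shows "unaryF F (\<lambda>x. of_bool (f x < g x))"
proof -
  have "of_bool (f x < g x) = 1 - (1 - (g x - f x))" for x
    by simp
  moreover have "unaryF F (\<lambda>x. 1 - (1 - (g x - f x)))"
    using assms by (intro unaryF_diff unaryF_const)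
  ultimately show ?thesis
    by simp
qed

lemma unaryF_dist:
  assumes "standard_conditions F" and "unaryF F f" and "unaryF F g"
  shows "unaryF F (\<lambda>x. (f x - g x) + (g x - f x))"
  using assms by (intro unaryF_add unaryF_diff)

lemma F_sequenceI:
  assumes "unaryF F f" and "unaryF F g" and "unaryF F h"
    and "\<And>x. A x = (of_nat (f x) - of_nat (g x)) / (of_nat (h x) + 1)"
  shows "F_sequence F A"
  using assms unfolding F_sequence_def by blast

lemma inverse_nat_quotient:
  fixes a b c :: nat
  assumes "a \<noteq> b"
  shows "1 / ((of_nat a - of_nat b) / (of_nat c + 1) :: 'a :: field_char_0)
    = (of_nat ((c + 1) * of_bool (b < a)) - of_nat ((c + 1) * of_bool (a < b)))
      / (of_nat ((a - b) + (b - a) - 1) + 1)"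
proof (cases "b < a")
  case True
  then show ?thesis
    by (simp add: of_nat_diff add.commute)
next
  case False
  with assms have "a < b" by simp
  have "of_nat c + 1 \<noteq> (0 :: 'a)"
    by (metis of_nat_Suc of_nat_eq_0_iff add.commute nat.distinct(1))
  with \<open>a < b\<close> show ?thesis
    by (simp add: of_nat_diff divide_simps) (simp add: algebra_simps)
qed

theorem mainTheorem10:
  fixes F :: "nat \<Rightarrow> (nat list \<Rightarrow> nat) set" and A :: "nat \<Rightarrow> rat"
  assumes "standard_conditions F"
    and "F_sequence F A"
    and "\<forall>x. A x \<noteq> 0"
  shows "F_sequence F (\<lambda>x. 1 / A x)"
proof -
  note sc = assms(1)
  obtain f g h where f: "unaryF F f" and g: "unaryF F g" and h: "unaryF F h"
    and A: "\<And>x. A x = (of_nat (f x) - of_nat (g x)) / (of_nat (h x) + 1)"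
    using assms(2) unfolding F_sequence_def by blast
  have "f x \<noteq> g x" for x
    using assms(3) A by (metis diff_self div_0)
  then have inverse_eq: "1 / A x =
      (of_nat ((h x + 1) * of_bool (g x < f x)) - of_nat ((h x + 1) * of_bool (f x < g x)))
      / (of_nat ((f x - g x) + (g x - f x) - 1) + 1)" for x
    unfolding A by (rule inverse_nat_quotient)
  have h1: "unaryF F (\<lambda>x. h x + 1)"
    using unaryF_add[OF sc h unaryF_const[OF sc]] .
  show ?thesis
  proof (rule F_sequenceI[OF _ _ _ inverse_eq])
    show "unaryF F (\<lambda>x. (h x + 1) * of_bool (g x < f x))"
      using unaryF_mult[OF sc h1 unaryF_less_indicator[OF sc g f]] .
    show "unaryF F (\<lambda>x. (h x + 1) * of_bool (f x < g x))"
      using unaryF_mult[OF sc h1 unaryF_less_indicator[OF sc f g]] .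
    show "unaryF F (\<lambda>x. (f x - g x) + (g x - f x) - 1)"
      using unaryF_diff[OF sc unaryF_dist[OF sc f g] unaryF_const[OF sc]] .
  qed
qed

end
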